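(* Let $G$ be a finite group, $A$ an abelian group and $f:G\to A$ an arbitrary function. Let $f^{g_1},\dots,f^{g_n}$ (with $g_1,\dots,g_n\in G$) be the distinct elements of the set $\{f^g: g\in G\}$. Then the function $\overline f:G\to A$ defined by $\overline f(x)=\prod_{i=1}^n f^{g_i}(x)$ is a group homomorphism.
   Context: For a function $f:G\to A$ and $a\in G$, $f^a:G\to A$ is defined by $f^a(x)=f(a)^{-1}f(ax)$. *)

theory Defs
  imports "HOL-Algebra.Algebra"
begin

text \<open>The translate f^a of f : G -> A, f^a(x) = f(a)^{-1} f(ax), as a function
  on the carrier of G (extensional, so distinct translates are distinct as maps G -> A).\<close>
definition translate ::
  "('g, 'c) monoid_scheme \<Rightarrow> ('a, 'd) monoid_scheme \<Rightarrow> ('g \<Rightarrow> 'a) \<Rightarrow> 'g \<Rightarrow> ('g \<Rightarrow> 'a)" where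
  "translate G A f a = (\<lambda>x\<in>carrier G. inv\<^bsub>A\<^esub> (f a) \<otimes>\<^bsub>A\<^esub> f (a \<otimes>\<^bsub>G\<^esub> x))"

end

theory Submission
  imports Defs
begin

text \<open>Since \<open>(f\<^sup>a)\<^sup>b = f\<^sup>a\<^sup>b\<close>, the map \<open>h \<mapsto> h\<^sup>b\<close> permutes the finite set of translates
  of \<open>f\<close>. Multiplying the identity \<open>h(bx) = h(b) h\<^sup>b(x)\<close> over all translates \<open>h\<close> (which
  needs \<open>A\<close> abelian) and reindexing the second factor by this permutation gives
  \<open>F(bx) = F(b) F(x)\<close> for the product \<open>F\<close> of the translates.\<close>

lemma translate_closed:
  assumes "monoid G" "group A" "f \<in> carrier G \<rightarrow> carrier A" "a \<in> carrier G"
  shows "translate G A f a \<in> carrier G \<rightarrow> carrier A"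
  using assms by (auto simp: translate_def Pi_iff intro!: group.inv_closed monoid.m_closed group.is_monoid)

lemma translate_translate:
  assumes "monoid G" "group A" "f \<in> carrier G \<rightarrow> carrier A"
    and "a \<in> carrier G" "b \<in> carrier G"
  shows "translate G A (translate G A f a) b = translate G A f (a \<otimes>\<^bsub>G\<^esub> b)"
proof
  interpret G: monoid G by fact
  interpret A: group A by fact
  fix y
  show "translate G A (translate G A f a) b y = translate G A f (a \<otimes>\<^bsub>G\<^esub> b) y"
  proof (cases "y \<in> carrier G")
    case True
    have fa: "f a \<in> carrier A" and fab: "f (a \<otimes>\<^bsub>G\<^esub> b) \<in> carrier A"
      and faby: "f (a \<otimes>\<^bsub>G\<^esub> b \<otimes>\<^bsub>G\<^esub> y) \<in> carrier A"
      using assms True by auto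
    have "translate G A (translate G A f a) b y
        = inv\<^bsub>A\<^esub> (inv\<^bsub>A\<^esub> (f a) \<otimes>\<^bsub>A\<^esub> f (a \<otimes>\<^bsub>G\<^esub> b)) \<otimes>\<^bsub>A\<^esub> (inv\<^bsub>A\<^esub> (f a) \<otimes>\<^bsub>A\<^esub> f (a \<otimes>\<^bsub>G\<^esub> b \<otimes>\<^bsub>G\<^esub> y))"
      using True assms by (simp add: translate_def G.m_assoc)
    also have "\<dots> = inv\<^bsub>A\<^esub> (f (a \<otimes>\<^bsub>G\<^esub> b)) \<otimes>\<^bsub>A\<^esub> f (a \<otimes>\<^bsub>G\<^esub> b \<otimes>\<^bsub>G\<^esub> y)"
      using fa fab faby by (simp add: A.inv_mult_group A.m_assoc flip: A.m_assoc[of "f a"])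
    also have "\<dots> = translate G A f (a \<otimes>\<^bsub>G\<^esub> b) y"
      using True by (simp add: translate_def)
    finally show ?thesis .
  next
    case False
    then show ?thesis by (simp add: translate_def)
  qed
qed

lemma apply_mult_eq_translate:
  assumes "monoid G" "group A" "h \<in> carrier G \<rightarrow> carrier A"
    and "b \<in> carrier G" "x \<in> carrier G"
  shows "h (b \<otimes>\<^bsub>G\<^esub> x) = h b \<otimes>\<^bsub>A\<^esub> translate G A h b x"
proof -
  interpret A: group A by fact
  have "h b \<in> carrier A" "h (b \<otimes>\<^bsub>G\<^esub> x) \<in> carrier A"
    using assms by (auto intro: monoid.m_closed)
  then show ?thesis
    using assms(5) by (simp add: translate_def A.m_assoc[symmetric])
qed

lemma translate_image_translates:
  assumes "group G" "group A" "f \<in> carrier G \<rightarrow> carrier A" "b \<in> carrier G"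
  shows "(\<lambda>h. translate G A h b) ` translate G A f ` carrier G = translate G A f ` carrier G"
proof -
  interpret G: group G by fact
  have "(\<lambda>a. a \<otimes>\<^bsub>G\<^esub> b) ` carrier G = carrier G #>\<^bsub>G\<^esub> b"
    by (auto simp: r_coset_def)
  also have "\<dots> = carrier G"
    using assms(4) by (simp add: G.coset_join2 G.subgroup_self)
  finally have right_mult: "(\<lambda>a. a \<otimes>\<^bsub>G\<^esub> b) ` carrier G = carrier G" .
  have "(\<lambda>h. translate G A h b) ` translate G A f ` carrier G
      = translate G A f ` (\<lambda>a. a \<otimes>\<^bsub>G\<^esub> b) ` carrier G"
    unfolding image_image
    using translate_translate[OF G.is_monoid assms(2,3) _ assms(4)] by (auto simp: image_iff)
  then show ?thesis
    by (simp add: right_mult)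
qed

lemma finprod_translation_invariant_hom:
  assumes "monoid G" "comm_group A" "finite T" "T \<subseteq> carrier G \<rightarrow> carrier A"
    and invariant: "\<And>b. b \<in> carrier G \<Longrightarrow> (\<lambda>h. translate G A h b) ` T = T"
  shows "(\<lambda>x. finprod A (\<lambda>h. h x) T) \<in> hom G A"
proof -
  interpret G: monoid G by fact
  interpret A: comm_group A by fact
  have evaluation_closed: "(\<lambda>h. h x) \<in> T \<rightarrow> carrier A" if "x \<in> carrier G" for x
    using assms(4) that by auto
  have "finprod A (\<lambda>h. h (b \<otimes>\<^bsub>G\<^esub> x)) T = finprod A (\<lambda>h. h b) T \<otimes>\<^bsub>A\<^esub> finprod A (\<lambda>h. h x) T"
    if b: "b \<in> carrier G" and x: "x \<in> carrier G" for b x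
  proof -
    define \<sigma> where "\<sigma> h = translate G A h b" for h
    have \<sigma>_closed: "(\<lambda>h. \<sigma> h x) \<in> T \<rightarrow> carrier A"
      using translate_closed[OF G.monoid_axioms A.is_group _ b] assms(4) x unfolding \<sigma>_def by blast
    have \<sigma>_image: "\<sigma> ` T = T"
      using invariant[OF b] unfolding \<sigma>_def .
    have "finprod A (\<lambda>h. h (b \<otimes>\<^bsub>G\<^esub> x)) T = finprod A (\<lambda>h. h b \<otimes>\<^bsub>A\<^esub> \<sigma> h x) T"
    proof (rule A.finprod_cong'[OF refl])
      show "(\<lambda>h. h b \<otimes>\<^bsub>A\<^esub> \<sigma> h x) \<in> T \<rightarrow> carrier A"
        using evaluation_closed[OF b] \<sigma>_closed by blast
      show "h (b \<otimes>\<^bsub>G\<^esub> x) = h b \<otimes>\<^bsub>A\<^esub> \<sigma> h x" if "h \<in> T" for h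
        using apply_mult_eq_translate[OF G.monoid_axioms A.is_group _ b x] assms(4) that
        unfolding \<sigma>_def by blast
    qed
    also have "\<dots> = finprod A (\<lambda>h. h b) T \<otimes>\<^bsub>A\<^esub> finprod A (\<lambda>h. \<sigma> h x) T"
      using evaluation_closed[OF b] \<sigma>_closed by (rule A.finprod_multf)
    also have "finprod A (\<lambda>h. \<sigma> h x) T = finprod A (\<lambda>h. h x) (\<sigma> ` T)"
    proof (rule A.finprod_reindex[symmetric])
      show "(\<lambda>h. h x) \<in> \<sigma> ` T \<rightarrow> carrier A"
        using evaluation_closed[OF x] unfolding \<sigma>_image .
      show "inj_on \<sigma> T"
        using assms(3) \<sigma>_image by (intro eq_card_imp_inj_on) simp_all
    qed
    finally show ?thesis
      unfolding \<sigma>_image .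
  qed
  then show ?thesis
    using evaluation_closed by (intro homI) auto
qed

theorem mainTheorem5:
  fixes G :: "('g, 'c) monoid_scheme" and A :: "('a, 'd) monoid_scheme"
    and f :: "'g \<Rightarrow> 'a"
  assumes "group G" and "finite (carrier G)" and "comm_group A"
    and "f \<in> carrier G \<rightarrow> carrier A"
  shows "(\<lambda>x. finprod A (\<lambda>h. h x) (translate G A f ` carrier G)) \<in> hom G A"
proof (rule finprod_translation_invariant_hom)
  have "group A"
    using assms(3) by (rule comm_group.axioms(2))
  show "monoid G"
    using assms(1) by (rule group.is_monoid)
  show "finite (translate G A f ` carrier G)"
    using assms(2) by simp
  show "translate G A f ` carrier G \<subseteq> carrier G \<rightarrow> carrier A"
    using translate_closed[OF \<open>monoid G\<close> \<open>group A\<close> assms(4)] by blast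
  show "(\<lambda>h. translate G A h b) ` translate G A f ` carrier G = translate G A f ` carrier G"
    if "b \<in> carrier G" for b
    using translate_image_translates[OF assms(1) \<open>group A\<close> assms(4) that] .
qed (fact assms)

end
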